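(* Let $G$ be a simple graph with $m \ge 1$ edges, let $\Delta_1 \ge \dots \ge \Delta_m$ be as defined below, and let $z$ be the unique real number with $1 \le z \le m$ satisfying \[ z(z-1) = \sum_{k=1}^{\lfloor z \rfloor} \Delta_k + (z - \lfloor z \rfloor)\,\Delta_{\lceil z \rceil}. \] Then $q(G) \le z + 1$, with equality when $G$ is regular.
   Context: $q(G)$ denotes the largest eigenvalue of the signless Laplacian $D + A$ of $G$. For each edge $uv$ of $G$ put $d_u + d_v - 2$ (the degree of $uv$ in the line graph of $G$), and let $\Delta_1 \ge \dots \ge \Delta_m$ be these $m$ numbers in non-increasing order. (The existence and uniqueness of $z$ is the Edwards–Elphick fact that for any graph on $N$ vertices with degrees $e_1\ge\dots\ge e_N$ the equation $y(y-1)=\sum_{k=1}^{\lfloor y\rfloor}e_k+(y-\lfloor y\rfloor)e_{\lceil y\rceil}$ has a unique solution in $[1,N]$, applied to the line graph.) *)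

theory Defs
  imports "HOL-Analysis.Analysis" "HOL-Library.Multiset"
begin

definition simple_graph :: "('n::finite \<Rightarrow> 'n \<Rightarrow> bool) \<Rightarrow> bool" where
  "simple_graph E \<longleftrightarrow> (\<forall>u v. E u v \<longrightarrow> E v u) \<and> (\<forall>u. \<not> E u u)"

definition edges :: "('n::finite \<Rightarrow> 'n \<Rightarrow> bool) \<Rightarrow> 'n set set" where
  "edges E = {{u, v} | u v. E u v}"

definition deg :: "('n::finite \<Rightarrow> 'n \<Rightarrow> bool) \<Rightarrow> 'n \<Rightarrow> nat" where
  "deg E u = card {v. E u v}"

definition regular :: "('n::finite \<Rightarrow> 'n \<Rightarrow> bool) \<Rightarrow> bool" where
  "regular E \<longleftrightarrow> (\<exists>r. \<forall>u. deg E u = r)"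

definition signless_laplacian :: "('n::finite \<Rightarrow> 'n \<Rightarrow> bool) \<Rightarrow> real^'n^'n" where
  "signless_laplacian E = (\<chi> i j. (if i = j then real (deg E i) else 0) + (if E i j then 1 else 0))"

definition eigenvalue_of :: "real^'n^'n \<Rightarrow> real \<Rightarrow> bool" where
  "eigenvalue_of A c \<longleftrightarrow> (\<exists>v. v \<noteq> 0 \<and> A *v v = c *\<^sub>R v)"

definition q_index :: "('n::finite \<Rightarrow> 'n \<Rightarrow> bool) \<Rightarrow> real" where
  "q_index E = Max {c. eigenvalue_of (signless_laplacian E) c}"

text \<open>Edge degree d_u + d_v - 2 of the edge {u,v} (its degree in the line graph).\<close>
definition edge_deg :: "('n::finite \<Rightarrow> 'n \<Rightarrow> bool) \<Rightarrow> 'n set \<Rightarrow> real" where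
  "edge_deg E e = (\<Sum>u\<in>e. real (deg E u)) - 2"

text \<open>Delta_1 >= ... >= Delta_m, indexed from 1.\<close>
definition Delta :: "('n::finite \<Rightarrow> 'n \<Rightarrow> bool) \<Rightarrow> nat \<Rightarrow> real" where
  "Delta E k = rev (sorted_list_of_multiset (image_mset (edge_deg E) (mset_set (edges E)))) ! (k - 1)"

end

theory Submission
  imports Defs
begin

text \<open>
  Write Q = D + A = R R^T with R the vertex-edge incidence matrix. If Qv = cv, then the edge
  vector y = R^T v satisfies (2I + A_L) y = c y, where A_L is the adjacency matrix of the line
  graph; hence w = |y| obeys (c - 2) w \<le> A_L w. Row sums of A_L are the edge degrees Delta_e
  and its entries are 0/1, which gives (c - 1) w_e \<le> sum w and (c - 2) sum w \<le> sum Delta_e w_e.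
  Normalising w to weights in [0,1] of total z, a fractional knapsack argument bounds
  sum Delta_e w_e by the right-hand side of the equation defining z, which forces c \<le> z + 1.
  For regular graphs the all-ones vector attains the bound.
\<close>

definition symmetric_matrix :: "real^'n^'n \<Rightarrow> bool" where
  "symmetric_matrix A \<longleftrightarrow> transpose A = A"

lemma symmetric_matrix_inner:
  assumes "symmetric_matrix A"
  shows "inner (A *v x) y = inner x (A *v y)"
proof -
  have "x v* A = A *v x"
    using assms transpose_matrix_vector[of A x] unfolding symmetric_matrix_def by simp
  then show ?thesis using dot_lmul_matrix[of x A y] by simp
qed

lemma symmetric_eigenvectors_orthogonal:
  assumes "symmetric_matrix A" "A *v x = a *\<^sub>R x" "A *v y = b *\<^sub>R y" "a \<noteq> b"
  shows "inner x y = 0"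
proof -
  have "a * inner x y = inner (A *v x) y" using assms(2) by simp
  also have "\<dots> = inner x (A *v y)" by (rule symmetric_matrix_inner[OF assms(1)])
  also have "\<dots> = b * inner x y" using assms(3) by simp
  finally show ?thesis using assms(4) by simp
qed

text \<open>Hence a symmetric matrix has finitely many eigenvalues: choosing one eigenvector per
  eigenvalue gives an orthogonal, thus linearly independent, family of nonzero vectors.\<close>
lemma symmetric_eigenvalues_finite:
  assumes "symmetric_matrix A"
  shows "finite {c. eigenvalue_of A c}"
proof -
  define S where "S = {c. eigenvalue_of A c}"
  define V where "V c = (SOME v. v \<noteq> 0 \<and> A *v v = c *\<^sub>R v)" for c
  have V: "V c \<noteq> 0 \<and> A *v V c = c *\<^sub>R V c" if "c \<in> S" for c
    unfolding V_def by (rule someI_ex) (use that in \<open>simp add: S_def eigenvalue_of_def\<close>)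
  have inj: "inj_on V S"
  proof (rule inj_onI)
    fix a b assume ab: "a \<in> S" "b \<in> S" "V a = V b"
    have "a *\<^sub>R V a = A *v V b" using V[OF ab(1)] ab(3) by simp
    also have "\<dots> = b *\<^sub>R V a" using V[OF ab(2)] ab(3) by simp
    finally show "a = b" using V[OF ab(1)] by simp
  qed
  have "pairwise orthogonal (V ` S)"
    unfolding pairwise_def orthogonal_def
  proof clarify
    fix a b assume "a \<in> S" "b \<in> S" "V a \<noteq> V b"
    then show "inner (V a) (V b) = 0"
      using V symmetric_eigenvectors_orthogonal[OF assms] by blast
  qed
  moreover have "0 \<notin> V ` S" using V by auto
  ultimately have "finite (V ` S)"
    by (intro independent_imp_finite pairwise_orthogonal_independent)
  then show ?thesis using inj finite_imageD unfolding S_def by blast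
qed

text \<open>A vector attaining the maximum M of the Rayleigh quotient is an eigenvector for M:
  the nonnegative form h(y) = M|y|^2 - y.Ay vanishes at x, and moving from x in the direction
  w = Mx - Ax decreases h to first order unless w = 0.\<close>
lemma rayleigh_maximizer_eigenvector:
  assumes sym: "symmetric_matrix A"
    and bound: "\<And>y. inner y (A *v y) \<le> M * inner y y"
    and attained: "inner x (A *v x) = M * inner x x"
  shows "A *v x = M *\<^sub>R x"
proof -
  define h where "h y = M * inner y y - inner y (A *v y)" for y
  define w where "w = M *\<^sub>R x - A *v x"
  have h_nonneg: "0 \<le> h y" for y using bound[of y] unfolding h_def by simp
  have w_w: "inner w w = M * inner x w - inner x (A *v w)"
    unfolding w_def by (simp add: inner_diff_left symmetric_matrix_inner[OF sym] inner_commute)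
  have h_x: "h x = 0" unfolding h_def using attained by simp
  have h_line: "h (x - t *\<^sub>R w) = - 2 * t * inner w w + t\<^sup>2 * h w" for t
  proof -
    have "inner w (A *v x) = inner x (A *v w)"
      using symmetric_matrix_inner[OF sym, of x w] by (simp add: inner_commute)
    then have "h (x - t *\<^sub>R w) = h x - 2 * t * (M * inner x w - inner x (A *v w)) + t\<^sup>2 * h w"
      unfolding h_def
      by (simp add: matrix_vector_mult_diff_distrib matrix_vector_mult_scaleR inner_diff_left
          inner_diff_right inner_commute[of w x] power2_eq_square algebra_simps)
    then show ?thesis unfolding h_x w_w by simp
  qed
  have "w = 0"
  proof (rule ccontr)
    assume "w \<noteq> 0"
    then have ww: "inner w w > 0" by simp
    define t where "t = inner w w / (h w + inner w w)"
    have den: "h w + inner w w > 0" using ww h_nonneg[of w] by linarith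
    have t_pos: "t > 0" unfolding t_def using ww den by simp
    have "t * h w \<le> inner w w"
      unfolding t_def using ww h_nonneg[of w] den by (simp add: field_simps)
    then have "t * (- 2 * inner w w + t * h w) < 0"
      using ww t_pos by (intro mult_pos_neg) linarith+
    then show False
      using h_nonneg[of "x - t *\<^sub>R w"] h_line[of t] by (simp add: power2_eq_square algebra_simps)
  qed
  then show ?thesis unfolding w_def by simp
qed

text \<open>Every symmetric matrix has a (real) eigenvalue: maximise y.Ay over the compact unit sphere.\<close>
lemma symmetric_has_eigenvalue:
  fixes A :: "real^'n^'n"
  assumes sym: "symmetric_matrix A"
  shows "\<exists>c. eigenvalue_of A c"
proof -
  define g where "g y = inner y (A *v y)" for y :: "real^'n"
  have "continuous_on (sphere 0 1) g"
    unfolding g_def by (intro continuous_intros linear_continuous_on matrix_vector_mul_linear)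
  moreover have "sphere (0::real^'n) 1 \<noteq> {}" by simp
  ultimately obtain x where x: "x \<in> sphere 0 1" and x_max: "\<And>y. y \<in> sphere 0 1 \<Longrightarrow> g y \<le> g x"
    using continuous_attains_sup[OF compact_sphere] by blast
  have norm_x: "inner x x = 1" using x by (simp add: dot_square_norm)
  have "g y \<le> g x * inner y y" for y
  proof (cases "y = 0")
    case False
    define u where "u = (1 / norm y) *\<^sub>R y"
    have "g u \<le> g x" using False x_max unfolding u_def by simp
    moreover have "g y = (norm y)\<^sup>2 * g u"
      using False unfolding u_def g_def by (simp add: matrix_vector_mult_scaleR power2_eq_square)
    ultimately show ?thesis
      by (simp add: dot_square_norm mult_right_mono mult.commute[of _ "g u"])
  qed (simp add: g_def)
  then have "A *v x = g x *\<^sub>R x"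
    using norm_x by (intro rayleigh_maximizer_eigenvector[OF sym]) (auto simp: g_def)
  moreover have "x \<noteq> 0" using x by auto
  ultimately show ?thesis unfolding eigenvalue_of_def by blast
qed

definition desc_values :: "('a \<Rightarrow> real) \<Rightarrow> 'a set \<Rightarrow> real list" where
  "desc_values d A = rev (sorted_list_of_multiset (image_mset d (mset_set A)))"

lemma mset_desc_values: "mset (desc_values d A) = image_mset d (mset_set A)"
  unfolding desc_values_def by simp

lemma length_desc_values: "finite A \<Longrightarrow> length (desc_values d A) = card A"
  by (metis mset_desc_values size_mset size_image_mset size_mset_set)

lemma set_desc_values: "finite A \<Longrightarrow> set (desc_values d A) = d ` A"
  by (metis mset_desc_values set_mset_mset set_image_mset finite_set_mset_mset_set)

lemma desc_values_antimono:
  assumes "i \<le> j" "j < length (desc_values d A)"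
  shows "desc_values d A ! j \<le> desc_values d A ! i"
proof -
  let ?S = "sorted_list_of_multiset (image_mset d (mset_set A))"
  have "desc_values d A ! j = ?S ! (length ?S - Suc j)"
    and "desc_values d A ! i = ?S ! (length ?S - Suc i)"
    using assms unfolding desc_values_def by (auto simp: rev_nth)
  moreover have "?S ! (length ?S - Suc j) \<le> ?S ! (length ?S - Suc i)"
    using assms unfolding desc_values_def by (intro sorted_nth_mono) auto
  ultimately show ?thesis by simp
qed

lemma sum_desc_values:
  assumes "finite A"
  shows "(\<Sum>e\<in>A. f (d e)) = (\<Sum>k<card A. f (desc_values d A ! k))"
proof -
  have "(\<Sum>e\<in>A. f (d e)) = sum_mset (image_mset f (mset (desc_values d A)))"
    unfolding mset_desc_values sum_unfold_sum_mset image_mset.compositionality o_def ..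
  also have "\<dots> = sum_list (map f (desc_values d A))"
    by (metis mset_map sum_mset_sum_list)
  also have "\<dots> = (\<Sum>k<card A. f (desc_values d A ! k))"
    using length_desc_values[OF assms] by (simp add: sum_list_sum_nth atLeast0LessThan)
  finally show ?thesis .
qed

text \<open>Weak LP duality for the fractional knapsack: for weights in [0,1] and any threshold theta,
  the weighted sum is at most the total excess over theta plus theta times the total weight.\<close>
lemma threshold_bound:
  fixes s d :: "'a \<Rightarrow> real"
  assumes "\<And>e. e \<in> A \<Longrightarrow> 0 \<le> s e \<and> s e \<le> 1"
  shows "(\<Sum>e\<in>A. s e * d e) \<le> (\<Sum>e\<in>A. max (d e - \<theta>) 0) + \<theta> * (\<Sum>e\<in>A. s e)"
proof -
  have "(\<Sum>e\<in>A. s e * d e) = (\<Sum>e\<in>A. s e * (d e - \<theta>)) + \<theta> * (\<Sum>e\<in>A. s e)"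
    by (simp add: algebra_simps sum.distrib sum_subtractf sum_distrib_left)
  also have "(\<Sum>e\<in>A. s e * (d e - \<theta>)) \<le> (\<Sum>e\<in>A. max (d e - \<theta>) 0)"
  proof (rule sum_mono)
    fix e assume "e \<in> A"
    with assms have "0 \<le> s e" "s e \<le> 1" by auto
    then show "s e * (d e - \<theta>) \<le> max (d e - \<theta>) 0"
      by (cases "d e \<le> \<theta>") (auto simp: mult_nonneg_nonpos intro: mult_left_le_one_le)
  qed
  finally show ?thesis by simp
qed

text \<open>Fractional knapsack: with weights in [0,1] of total z, the weighted sum of the values is at
  most the sum of the j largest values plus (z - j) times the next one; take theta = L!j above.\<close>
lemma fractional_knapsack:
  fixes s d :: "'a \<Rightarrow> real" and A :: "'a set"
  defines "L \<equiv> desc_values d A"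
  assumes fin: "finite A" and j: "j < card A"
    and s01: "\<And>e. e \<in> A \<Longrightarrow> 0 \<le> s e \<and> s e \<le> 1"
  shows "(\<Sum>e\<in>A. s e * d e) \<le> (\<Sum>k<j. L ! k) + ((\<Sum>e\<in>A. s e) - real j) * L ! j"
proof -
  define \<theta> where "\<theta> = L ! j"
  have len: "length L = card A" unfolding L_def using fin by (rule length_desc_values)
  have anti: "L ! k \<le> L ! i" if "i \<le> k" "k < card A" for i k
    using desc_values_antimono[where d = d and A = A] that len unfolding L_def by simp
  have excess: "(\<Sum>e\<in>A. max (d e - \<theta>) 0) = (\<Sum>k<j. L ! k - \<theta>)"
  proof -
    have "(\<Sum>e\<in>A. max (d e - \<theta>) 0) = (\<Sum>k<card A. max (L ! k - \<theta>) 0)"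
      unfolding L_def using fin by (rule sum_desc_values)
    also have "{..<card A} = {..<j} \<union> {j..<card A}" using j by auto
    also have "(\<Sum>k\<in>{..<j} \<union> {j..<card A}. max (L ! k - \<theta>) 0)
        = (\<Sum>k<j. max (L ! k - \<theta>) 0) + (\<Sum>k\<in>{j..<card A}. max (L ! k - \<theta>) 0)"
      by (rule sum.union_disjoint) auto
    also have "(\<Sum>k\<in>{j..<card A}. max (L ! k - \<theta>) 0) = 0"
      using anti unfolding \<theta>_def by (intro sum.neutral) auto
    also have "(\<Sum>k<j. max (L ! k - \<theta>) 0) = (\<Sum>k<j. L ! k - \<theta>)"
      using anti j unfolding \<theta>_def by (intro sum.cong) auto
    finally show ?thesis by simp
  qed
  have "(\<Sum>e\<in>A. s e * d e) \<le> (\<Sum>k<j. L ! k - \<theta>) + \<theta> * (\<Sum>e\<in>A. s e)"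
    using threshold_bound[where A = A and s = s and d = d and \<theta> = \<theta>, OF s01]
    unfolding excess by simp
  also have "\<dots> = (\<Sum>k<j. L ! k) + ((\<Sum>e\<in>A. s e) - real j) * L ! j"
    unfolding \<theta>_def by (simp add: sum_subtractf algebra_simps)
  finally show ?thesis .
qed

lemma sum_from_one_shift: "(\<Sum>k = 1..n. b (k - 1)) = (\<Sum>k<n. (b k :: real))" for n :: nat
  by (induction n) auto

text \<open>The right-hand side of the defining equation of z, rewritten with j = ceil z - 1 so that it
  matches the bound of the fractional knapsack lemma (both when z is and is not an integer).\<close>
lemma floor_ceiling_split:
  fixes z :: real and b :: "nat \<Rightarrow> real"
  assumes "1 \<le> z"
  defines "j \<equiv> nat \<lceil>z\<rceil> - 1"
  shows "(\<Sum>k = 1..nat \<lfloor>z\<rfloor>. b (k - 1)) + (z - of_int \<lfloor>z\<rfloor>) * b (nat \<lceil>z\<rceil> - 1)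
       = (\<Sum>k<j. b k) + (z - real j) * b j"
proof -
  have j: "nat \<lceil>z\<rceil> - 1 = j" unfolding j_def ..
  show ?thesis
  proof (cases "z = of_int \<lfloor>z\<rfloor>")
    case True
    then have "\<lceil>z\<rceil> = \<lfloor>z\<rfloor>" by (auto simp: ceiling_altdef)
    then have "nat \<lfloor>z\<rfloor> = Suc j" "real j = z - 1"
      using assms True unfolding j_def by linarith+
    then show ?thesis unfolding sum_from_one_shift j using True by simp
  next
    case False
    then have "\<lceil>z\<rceil> = \<lfloor>z\<rfloor> + 1" by (simp add: ceiling_altdef)
    then have "nat \<lfloor>z\<rfloor> = j" "real j = of_int \<lfloor>z\<rfloor>"
      using assms unfolding j_def by linarith+
    then show ?thesis unfolding sum_from_one_shift j by simp
  qed
qed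

lemma edge_cases:
  assumes "simple_graph E" "e \<in> edges E"
  obtains a b where "E a b" "a \<noteq> b" "e = {a, b}"
  using assms unfolding edges_def simple_graph_def by blast

lemma card_edge: "simple_graph E \<Longrightarrow> e \<in> edges E \<Longrightarrow> card e = 2"
  by (metis edge_cases card_2_iff)

lemma card_common_vertices:
  assumes "simple_graph E" "e \<in> edges E" "e' \<in> edges E" "e \<noteq> e'"
  shows "card (e \<inter> e') \<le> 1"
proof (rule ccontr)
  assume "\<not> card (e \<inter> e') \<le> 1"
  moreover have "card (e \<inter> e') \<le> card e" "card (e \<inter> e') \<le> card e'"
    by (simp_all add: card_mono)
  ultimately have "card (e \<inter> e') = card e" "card (e \<inter> e') = card e'"
    using card_edge[OF assms(1,2)] card_edge[OF assms(1,3)] by linarith+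
  then have "e \<inter> e' = e" "e \<inter> e' = e'"
    by (simp_all add: card_subset_eq)
  then show False using assms(4) by simp
qed

lemma incident_edges:
  assumes "simple_graph E"
  shows "{e \<in> edges E. u \<in> e} = (\<lambda>x. {u, x}) ` {x. E u x}"
proof
  show "{e \<in> edges E. u \<in> e} \<subseteq> (\<lambda>x. {u, x}) ` {x. E u x}"
  proof clarify
    fix e assume "e \<in> edges E" "u \<in> e"
    then obtain a b where "E a b" "e = {a, b}" "u \<in> {a, b}" using edge_cases[OF assms] by metis
    moreover have "E b a" using \<open>E a b\<close> assms unfolding simple_graph_def by blast
    ultimately have "E u (if u = a then b else a) \<and> e = {u, if u = a then b else a}"
      by (auto simp: doubleton_eq_iff)
    then show "e \<in> (\<lambda>x. {u, x}) ` {x. E u x}" by blast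
  qed
  show "(\<lambda>x. {u, x}) ` {x. E u x} \<subseteq> {e \<in> edges E. u \<in> e}"
    unfolding edges_def by auto
qed

lemma inj_on_edges_at: "inj_on (\<lambda>x. {u, x}) A"
  by (auto simp: inj_on_def doubleton_eq_iff)

lemma card_incident_edges:
  "simple_graph E \<Longrightarrow> card {e \<in> edges E. u \<in> e} = deg E u"
  unfolding deg_def by (simp add: incident_edges card_image inj_on_edges_at)

lemma sum_incident_edges:
  "simple_graph E \<Longrightarrow> (\<Sum>e\<in>{e \<in> edges E. u \<in> e}. f e) = (\<Sum>x | E u x. f {u, x})"
  by (simp add: incident_edges sum.reindex inj_on_edges_at)

lemma signless_laplacian_row:
  "(signless_laplacian E *v v) $ u = real (deg E u) * v $ u + (\<Sum>x | E u x. v $ x)"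
proof -
  have "(signless_laplacian E *v v) $ u
     = (\<Sum>x\<in>UNIV. (if u = x then real (deg E u) * v $ x else 0) + (if E u x then v $ x else 0))"
    unfolding matrix_vector_mult_def signless_laplacian_def
    by (auto intro!: sum.cong simp: distrib_right)
  also have "\<dots> = real (deg E u) * v $ u + (\<Sum>x | E u x. v $ x)"
    by (simp add: sum.distrib sum.inter_filter[symmetric])
  finally show ?thesis .
qed

lemma signless_laplacian_symmetric:
  "simple_graph E \<Longrightarrow> symmetric_matrix (signless_laplacian E)"
  unfolding simple_graph_def symmetric_matrix_def transpose_def signless_laplacian_def
  by (auto simp: vec_eq_iff)

text \<open>The edge vector y_e = v_a + v_b of a vertex vector v, i.e. R^T v for the vertex-edge
  incidence matrix R (recall Q = R R^T).\<close>
definition edge_sum :: "real^'n \<Rightarrow> 'n set \<Rightarrow> real" where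
  "edge_sum v e = (\<Sum>u\<in>e. v $ u)"

text \<open>If Qv = cv then the edge sums at u add up to c v_u (this is R y = R R^T v = Qv).\<close>
lemma incident_edge_sums:
  assumes sg: "simple_graph E" and ev: "signless_laplacian E *v v = c *\<^sub>R v"
  shows "(\<Sum>e | e \<in> edges E \<and> u \<in> e. edge_sum v e) = c * v $ u"
proof -
  have "(\<Sum>e | e \<in> edges E \<and> u \<in> e. edge_sum v e) = (\<Sum>x | E u x. edge_sum v {u, x})"
    by (rule sum_incident_edges[OF sg])
  also have "\<dots> = (\<Sum>x | E u x. v $ u + v $ x)"
    using sg unfolding simple_graph_def edge_sum_def by (intro sum.cong) (auto simp: sum.insert_if)
  also have "\<dots> = real (deg E u) * v $ u + (\<Sum>x | E u x. v $ x)"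
    by (simp add: sum.distrib deg_def)
  also have "\<dots> = c * v $ u"
    using signless_laplacian_row[of E v u] ev by simp
  finally show ?thesis .
qed

text \<open>If Qv = cv then y = R^T v satisfies (R^T R) y = c y, where (R^T R)_{ee'} = |e \<inter> e'|
  is 2I plus the adjacency matrix of the line graph.\<close>
lemma line_graph_eigen_equation:
  assumes sg: "simple_graph E" and ev: "signless_laplacian E *v v = c *\<^sub>R v"
  shows "(\<Sum>e'\<in>edges E. real (card (e \<inter> e')) * edge_sum v e') = c * edge_sum v e"
proof -
  have "(\<Sum>e'\<in>edges E. real (card (e \<inter> e')) * edge_sum v e')
      = (\<Sum>e'\<in>edges E. \<Sum>u\<in>e. if u \<in> e' then edge_sum v e' else 0)"
    by (intro sum.cong) (simp_all add: sum.If_cases Int_def)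
  also have "\<dots> = (\<Sum>u\<in>e. \<Sum>e'\<in>edges E. if u \<in> e' then edge_sum v e' else 0)"
    by (rule sum.swap)
  also have "\<dots> = (\<Sum>u\<in>e. c * v $ u)"
    using incident_edge_sums[OF sg ev] by (simp add: sum.inter_filter)
  also have "\<dots> = c * edge_sum v e"
    unfolding edge_sum_def by (simp add: sum_distrib_left)
  finally show ?thesis .
qed

lemma line_graph_subeigen:
  assumes sg: "simple_graph E" and ev: "signless_laplacian E *v v = c *\<^sub>R v"
    and c2: "2 \<le> c" and e: "e \<in> edges E"
  shows "(c - 2) * \<bar>edge_sum v e\<bar>
       \<le> (\<Sum>e'\<in>edges E - {e}. real (card (e \<inter> e')) * \<bar>edge_sum v e'\<bar>)"
proof -
  have "c * edge_sum v e = 2 * edge_sum v e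
      + (\<Sum>e'\<in>edges E - {e}. real (card (e \<inter> e')) * edge_sum v e')"
    using line_graph_eigen_equation[OF sg ev, of e] e card_edge[OF sg e]
    by (simp add: sum.remove)
  then have "(c - 2) * edge_sum v e = (\<Sum>e'\<in>edges E - {e}. real (card (e \<inter> e')) * edge_sum v e')"
    by (simp add: algebra_simps)
  moreover have "(c - 2) * \<bar>edge_sum v e\<bar> = \<bar>(c - 2) * edge_sum v e\<bar>"
    using c2 by (simp add: abs_mult)
  ultimately have "(c - 2) * \<bar>edge_sum v e\<bar>
      = \<bar>\<Sum>e'\<in>edges E - {e}. real (card (e \<inter> e')) * edge_sum v e'\<bar>"
    by simp
  also have "\<dots> \<le> (\<Sum>e'\<in>edges E - {e}. \<bar>real (card (e \<inter> e')) * edge_sum v e'\<bar>)"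
    by (rule sum_abs)
  finally show ?thesis by (simp add: abs_mult)
qed

lemma common_vertex_total:
  assumes sg: "simple_graph E" and e': "e' \<in> edges E"
  shows "(\<Sum>e\<in>edges E - {e'}. real (card (e \<inter> e'))) = edge_deg E e'"
proof -
  have "(\<Sum>e\<in>edges E. real (card (e \<inter> e'))) = (\<Sum>e\<in>edges E. \<Sum>u\<in>e'. if u \<in> e then 1 else 0)"
    by (intro sum.cong) (simp_all add: sum.If_cases Int_def conj_commute)
  also have "\<dots> = (\<Sum>u\<in>e'. \<Sum>e\<in>edges E. if u \<in> e then 1 else 0)"
    by (rule sum.swap)
  also have "\<dots> = (\<Sum>u\<in>e'. real (deg E u))"
    using card_incident_edges[OF sg] by (simp add: sum.If_cases Int_def)
  finally have "(\<Sum>e\<in>edges E. real (card (e \<inter> e'))) = (\<Sum>u\<in>e'. real (deg E u))" .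
  then show ?thesis
    using e' card_edge[OF sg e'] unfolding edge_deg_def by (simp add: sum.remove)
qed

lemma sum_off_diagonal_swap:
  "finite A \<Longrightarrow> (\<Sum>x\<in>A. \<Sum>y\<in>A - {x}. g x y) = (\<Sum>y\<in>A. \<Sum>x\<in>A - {y}. g x y)"
  using sum.swap_restrict[of A A g "\<lambda>x y. x \<noteq> y"]
  by (simp add: set_diff_eq conj_commute eq_commute)

lemma edge_sums_nonzero:
  assumes sg: "simple_graph E" and ev: "signless_laplacian E *v v = c *\<^sub>R v"
    and "c \<noteq> 0" "v \<noteq> 0"
  shows "\<exists>e\<in>edges E. edge_sum v e \<noteq> 0"
proof (rule ccontr)
  assume "\<not> ?thesis"
  then have "c * v $ u = 0" for u
    using incident_edge_sums[OF sg ev, of u] by simp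
  then show False using assms(3,4) by (simp add: vec_eq_iff)
qed

lemma Delta_eq_desc_values: "Delta E k = desc_values (edge_deg E) (edges E) ! (k - 1)"
  unfolding Delta_def desc_values_def ..

lemma edge_deg_knapsack:
  fixes E :: "'n::finite \<Rightarrow> 'n \<Rightarrow> bool" and s :: "'n set \<Rightarrow> real"
  assumes z: "1 \<le> z" "z \<le> real (card (edges E))"
    and s01: "\<And>e. e \<in> edges E \<Longrightarrow> 0 \<le> s e \<and> s e \<le> 1"
    and s_sum: "(\<Sum>e\<in>edges E. s e) = z"
  shows "(\<Sum>e\<in>edges E. s e * edge_deg E e)
       \<le> (\<Sum>k = 1..nat \<lfloor>z\<rfloor>. Delta E k) + (z - of_int \<lfloor>z\<rfloor>) * Delta E (nat \<lceil>z\<rceil>)"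
proof -
  define L where "L = desc_values (edge_deg E) (edges E)"
  define j where "j = nat \<lceil>z\<rceil> - 1"
  have "j < card (edges E)" using z unfolding j_def by linarith
  then have "(\<Sum>e\<in>edges E. s e * edge_deg E e) \<le> (\<Sum>k<j. L ! k) + (z - real j) * L ! j"
    using fractional_knapsack[where d = "edge_deg E" and A = "edges E" and s = s, OF finite _ s01]
    unfolding L_def s_sum by simp
  also have "\<dots> = (\<Sum>k = 1..nat \<lfloor>z\<rfloor>. L ! (k - 1)) + (z - of_int \<lfloor>z\<rfloor>) * L ! (nat \<lceil>z\<rceil> - 1)"
    unfolding j_def using floor_ceiling_split[OF z(1), of "(!) L"] by simp
  finally show ?thesis unfolding Delta_eq_desc_values L_def .
qed

text \<open>With w = |R^T v| and c \<ge> 2: since distinct edges meet in at most one vertex, the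
  sub-eigen inequality gives (c - 1) w_e \<le> W, the total weight.\<close>
lemma edge_weight_row_bound:
  assumes sg: "simple_graph E" and ev: "signless_laplacian E *v v = c *\<^sub>R v"
    and c2: "2 \<le> c" and e: "e \<in> edges E"
  shows "(c - 1) * \<bar>edge_sum v e\<bar> \<le> (\<Sum>e'\<in>edges E. \<bar>edge_sum v e'\<bar>)"
proof -
  have "(\<Sum>e'\<in>edges E - {e}. real (card (e \<inter> e')) * \<bar>edge_sum v e'\<bar>)
      \<le> (\<Sum>e'\<in>edges E - {e}. \<bar>edge_sum v e'\<bar>)"
    using card_common_vertices[OF sg e] by (intro sum_mono mult_left_le_one_le) auto
  also have "\<dots> = (\<Sum>e'\<in>edges E. \<bar>edge_sum v e'\<bar>) - \<bar>edge_sum v e\<bar>"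
    using e by (simp add: sum_diff1)
  finally show ?thesis
    using line_graph_subeigen[OF sg ev c2 e] by (simp add: algebra_simps)
qed

text \<open>Summing the sub-eigen inequality over all edges and using the row sums of the line graph:
  (c - 2) W is at most the sum of w_e Delta_e.\<close>
lemma edge_weight_total_bound:
  assumes sg: "simple_graph E" and ev: "signless_laplacian E *v v = c *\<^sub>R v" and c2: "2 \<le> c"
  shows "(c - 2) * (\<Sum>e\<in>edges E. \<bar>edge_sum v e\<bar>)
       \<le> (\<Sum>e\<in>edges E. \<bar>edge_sum v e\<bar> * edge_deg E e)"
proof -
  have "(c - 2) * (\<Sum>e\<in>edges E. \<bar>edge_sum v e\<bar>)
      \<le> (\<Sum>e\<in>edges E. \<Sum>e'\<in>edges E - {e}. real (card (e \<inter> e')) * \<bar>edge_sum v e'\<bar>)"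
    unfolding sum_distrib_left using line_graph_subeigen[OF sg ev c2] by (rule sum_mono)
  also have "\<dots> = (\<Sum>e'\<in>edges E. \<Sum>e\<in>edges E - {e'}. real (card (e \<inter> e')) * \<bar>edge_sum v e'\<bar>)"
    by (rule sum_off_diagonal_swap) simp
  also have "\<dots> = (\<Sum>e'\<in>edges E. \<bar>edge_sum v e'\<bar> * edge_deg E e')"
    using common_vertex_total[OF sg]
    by (intro sum.cong) (simp_all add: sum_distrib_right[symmetric])
  finally show ?thesis .
qed

text \<open>If c > z + 1 were an eigenvalue with eigenvector v, the weights
  s = z w / W (with w = |R^T v| and W its sum) lie in [0,1] and sum to z by the row bound, and
  z (c - 2) \<le> sum of s_e Delta_e \<le> z (z - 1) by the total bound and the knapsack bound.\<close>
lemma signless_eigenvalue_le: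
  fixes E :: "'n::finite \<Rightarrow> 'n \<Rightarrow> bool" and v :: "real^'n"
  assumes sg: "simple_graph E"
    and z: "1 \<le> z" "z \<le> real (card (edges E))"
    and z_eq: "z * (z - 1) = (\<Sum>k = 1..nat \<lfloor>z\<rfloor>. Delta E k)
                       + (z - of_int \<lfloor>z\<rfloor>) * Delta E (nat \<lceil>z\<rceil>)"
    and v: "v \<noteq> 0" and ev: "signless_laplacian E *v v = c *\<^sub>R v"
  shows "c \<le> z + 1"
proof (rule ccontr)
  assume "\<not> c \<le> z + 1"
  then have c: "z + 1 < c" by simp
  define w where "w e = \<bar>edge_sum v e\<bar>" for e
  define W where "W = (\<Sum>e\<in>edges E. w e)"
  have W_pos: "0 < W"
  proof -
    obtain e where "e \<in> edges E" "w e \<noteq> 0"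
      using edge_sums_nonzero[OF sg ev _ v] c z unfolding w_def by auto
    then show ?thesis
      unfolding W_def w_def by (intro sum_pos2) auto
  qed
  define s where "s e = z * w e / W" for e
  have s01: "0 \<le> s e \<and> s e \<le> 1" if "e \<in> edges E" for e
  proof
    show "0 \<le> s e" unfolding s_def w_def using z W_pos by simp
    have "z * w e \<le> (c - 1) * w e" using c unfolding w_def by (simp add: mult_right_mono)
    also have "\<dots> \<le> W"
      using edge_weight_row_bound[OF sg ev _ that] c z unfolding W_def w_def by simp
    finally show "s e \<le> 1" unfolding s_def using W_pos by simp
  qed
  have "(\<Sum>e\<in>edges E. s e) = z"
    unfolding s_def using W_pos
    by (simp add: W_def sum_divide_distrib[symmetric] sum_distrib_left[symmetric])
  then have "(\<Sum>e\<in>edges E. s e * edge_deg E e) \<le> z * (z - 1)"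
    using edge_deg_knapsack[OF z s01] z_eq by simp
  moreover have "z * (c - 2) \<le> (\<Sum>e\<in>edges E. s e * edge_deg E e)"
  proof -
    have "z * (c - 2) = z / W * ((c - 2) * W)" using W_pos by simp
    also have "\<dots> \<le> z / W * (\<Sum>e\<in>edges E. w e * edge_deg E e)"
      using edge_weight_total_bound[OF sg ev] W_pos c z unfolding W_def w_def
      by (intro mult_left_mono) auto
    also have "\<dots> = (\<Sum>e\<in>edges E. s e * edge_deg E e)"
      unfolding s_def by (simp add: sum_distrib_left mult.assoc)
    finally show ?thesis .
  qed
  ultimately have "z * (c - 2) \<le> z * (z - 1)" by linarith
  then have "c - 2 \<le> z - 1" using z by simp
  then show False using c by simp
qed

lemma regular_all_ones_eigenvector:
  assumes "\<And>u. deg E u = r"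
  shows "signless_laplacian E *v (\<chi> i. 1) = (2 * real r) *\<^sub>R (\<chi> i. 1)"
  using assms by (simp add: vec_eq_iff signless_laplacian_row deg_def)

lemma Delta_regular:
  assumes sg: "simple_graph E" and r: "\<And>u. deg E u = r"
    and k: "1 \<le> k" "k \<le> card (edges E)"
  shows "Delta E k = 2 * real r - 2"
proof -
  let ?L = "desc_values (edge_deg E) (edges E)"
  have "?L ! (k - 1) \<in> set ?L" using k length_desc_values[of "edges E"] by simp
  then obtain e where e: "e \<in> edges E" "Delta E k = edge_deg E e"
    unfolding Delta_eq_desc_values set_desc_values[OF finite] by auto
  then show ?thesis using r card_edge[OF sg e(1)] unfolding edge_deg_def by simp
qed

lemma regular_equation_solution:
  assumes sg: "simple_graph E" and r: "\<And>u. deg E u = r"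
    and z: "1 \<le> z" "z \<le> real (card (edges E))"
    and z_eq: "z * (z - 1) = (\<Sum>k = 1..nat \<lfloor>z\<rfloor>. Delta E k)
                       + (z - of_int \<lfloor>z\<rfloor>) * Delta E (nat \<lceil>z\<rceil>)"
  shows "z + 1 = 2 * real r"
proof -
  have "(\<Sum>k = 1..nat \<lfloor>z\<rfloor>. Delta E k) = (\<Sum>k = 1..nat \<lfloor>z\<rfloor>. 2 * real r - 2)"
  proof (intro sum.cong refl Delta_regular[OF sg r])
    fix k assume "k \<in> {1..nat \<lfloor>z\<rfloor>}"
    then show "1 \<le> k" "k \<le> card (edges E)" using z by auto linarith
  qed
  also have "\<dots> = of_int \<lfloor>z\<rfloor> * (2 * real r - 2)"
    using z by simp
  finally have sum_eq: "(\<Sum>k = 1..nat \<lfloor>z\<rfloor>. Delta E k) = of_int \<lfloor>z\<rfloor> * (2 * real r - 2)" .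
  have last_eq: "Delta E (nat \<lceil>z\<rceil>) = 2 * real r - 2"
    using z by (intro Delta_regular[OF sg r]) linarith+
  have "z * (z - 1) = z * (2 * real r - 2)"
    using z_eq unfolding sum_eq last_eq by (simp add: algebra_simps)
  then show ?thesis using z by simp
qed

theorem mainTheorem5:
  fixes E :: "'n::finite \<Rightarrow> 'n \<Rightarrow> bool" and z :: real
  assumes "simple_graph E"
    and "card (edges E) \<ge> 1"
    and "1 \<le> z" and "z \<le> real (card (edges E))"
    and "z * (z - 1) = (\<Sum>k = 1..nat \<lfloor>z\<rfloor>. Delta E k)
                       + (z - of_int \<lfloor>z\<rfloor>) * Delta E (nat \<lceil>z\<rceil>)"
  shows "q_index E \<le> z + 1 \<and> (regular E \<longrightarrow> q_index E = z + 1)"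
proof -
  note sg = assms(1) and z = assms(3-5)
  define S where "S = {c. eigenvalue_of (signless_laplacian E) c}"
  have finite: "finite S" and nonempty: "S \<noteq> {}"
    using symmetric_eigenvalues_finite symmetric_has_eigenvalue signless_laplacian_symmetric[OF sg]
    unfolding S_def by auto
  have bounded: "c \<le> z + 1" if "c \<in> S" for c
    using that signless_eigenvalue_le[OF sg z] unfolding S_def eigenvalue_of_def by blast
  have "q_index E \<le> z + 1"
    unfolding q_index_def S_def[symmetric] using finite nonempty bounded by simp
  moreover have "q_index E = z + 1" if "regular E"
  proof -
    obtain r where r: "\<And>u. deg E u = r" using \<open>regular E\<close> unfolding regular_def by blast
    have "(\<chi> i. 1) \<noteq> (0 :: real^'n)" by (simp add: vec_eq_iff)
    then have "2 * real r \<in> S"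
      unfolding S_def eigenvalue_of_def using regular_all_ones_eigenvector[OF r] by blast
    moreover have "z + 1 = 2 * real r" by (rule regular_equation_solution[OF sg r z])
    ultimately show ?thesis
      unfolding q_index_def S_def[symmetric] using finite bounded by (intro Max_eqI) auto
  qed
  ultimately show ?thesis by blast
qed

end
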